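(* Let $K$ be a field of characteristic $0$ and let $\eta\in K\setminus\{0\}$ not be a root of unity. Then the down-up algebra $A_\eta=A(1+\eta,-\eta,1)$ does not have property $(\diamond)$: there exists a finitely generated monolithic left $A_\eta$-module that is not artinian.
   Context: For $\alpha,\beta,\gamma\in K$, the down-up algebra $A(\alpha,\beta,\gamma)$ is the $K$-algebra generated by $d,u$ with relations $d^2u=\alpha dud+\beta ud^2+\gamma d$ and $du^2=\alpha udu+\beta u^2d+\gamma u$. A module $M$ is monolithic if the intersection of all nonzero submodules of $M$ is nonzero. A noetherian ring has property $(\diamond)$ if every finitely generated monolithic module over it is artinian. *)

theory Defs
  imports Main "HOL-Library.Function_Algebras"
begin

text \<open>Left modules over the down-up algebra A(alpha,beta,gamma), i.e. over the K-algebra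
generated by d,u subject to the two down-up relations.  By the universal property of an
algebra given by generators and relations, a left A-module is the same as a K-vector space
together with two K-linear operators D (action of d) and U (action of u) satisfying the
relations.  Since we need to quantify existentially over modules, the underlying vector
space is a K-subspace V of the fixed ambient space nat => K (every finitely generated
A-module has countable K-dimension, hence is isomorphic to such a subspace).\<close>

definition vsmult :: "'k::field \<Rightarrow> (nat \<Rightarrow> 'k) \<Rightarrow> (nat \<Rightarrow> 'k)" where
  "vsmult c x = (\<lambda>n. c * x n)"

definition is_subspace :: "(nat \<Rightarrow> 'k::field) set \<Rightarrow> bool" where
  "is_subspace V \<longleftrightarrow> 0 \<in> V \<and> (\<forall>x\<in>V. \<forall>y\<in>V. x + y \<in> V) \<and> (\<forall>c. \<forall>x\<in>V. vsmult c x \<in> V)"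

definition downup_module ::
  "'k::field \<Rightarrow> 'k \<Rightarrow> 'k \<Rightarrow> (nat \<Rightarrow> 'k) set \<Rightarrow> ((nat \<Rightarrow> 'k) \<Rightarrow> (nat \<Rightarrow> 'k))
     \<Rightarrow> ((nat \<Rightarrow> 'k) \<Rightarrow> (nat \<Rightarrow> 'k)) \<Rightarrow> bool" where
  "downup_module \<alpha> \<beta> \<gamma> V D U \<longleftrightarrow>
     is_subspace V \<and>
     (\<forall>x\<in>V. D x \<in> V \<and> U x \<in> V) \<and>
     (\<forall>x\<in>V. \<forall>y\<in>V. D (x + y) = D x + D y \<and> U (x + y) = U x + U y) \<and>
     (\<forall>c. \<forall>x\<in>V. D (vsmult c x) = vsmult c (D x) \<and> U (vsmult c x) = vsmult c (U x)) \<and>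
     (\<forall>x\<in>V. D (D (U x)) = vsmult \<alpha> (D (U (D x))) + vsmult \<beta> (U (D (D x))) + vsmult \<gamma> (D x)) \<and>
     (\<forall>x\<in>V. D (U (U x)) = vsmult \<alpha> (U (D (U x))) + vsmult \<beta> (U (U (D x))) + vsmult \<gamma> (U x))"

definition submodule ::
  "(nat \<Rightarrow> 'k::field) set \<Rightarrow> ((nat \<Rightarrow> 'k) \<Rightarrow> (nat \<Rightarrow> 'k)) \<Rightarrow> ((nat \<Rightarrow> 'k) \<Rightarrow> (nat \<Rightarrow> 'k))
     \<Rightarrow> (nat \<Rightarrow> 'k) set \<Rightarrow> bool" where
  "submodule V D U W \<longleftrightarrow> W \<subseteq> V \<and> is_subspace W \<and> (\<forall>x\<in>W. D x \<in> W \<and> U x \<in> W)"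

definition finitely_generated_mod ::
  "(nat \<Rightarrow> 'k::field) set \<Rightarrow> ((nat \<Rightarrow> 'k) \<Rightarrow> (nat \<Rightarrow> 'k)) \<Rightarrow> ((nat \<Rightarrow> 'k) \<Rightarrow> (nat \<Rightarrow> 'k)) \<Rightarrow> bool" where
  "finitely_generated_mod V D U \<longleftrightarrow>
     (\<exists>S. finite S \<and> S \<subseteq> V \<and> V = \<Inter>{W. submodule V D U W \<and> S \<subseteq> W})"

definition monolithic_mod ::
  "(nat \<Rightarrow> 'k::field) set \<Rightarrow> ((nat \<Rightarrow> 'k) \<Rightarrow> (nat \<Rightarrow> 'k)) \<Rightarrow> ((nat \<Rightarrow> 'k) \<Rightarrow> (nat \<Rightarrow> 'k)) \<Rightarrow> bool" where
  "monolithic_mod V D U \<longleftrightarrow> V \<inter> \<Inter>{W. submodule V D U W \<and> W \<noteq> {0}} \<noteq> {0}"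

definition artinian_mod ::
  "(nat \<Rightarrow> 'k::field) set \<Rightarrow> ((nat \<Rightarrow> 'k) \<Rightarrow> (nat \<Rightarrow> 'k)) \<Rightarrow> ((nat \<Rightarrow> 'k) \<Rightarrow> (nat \<Rightarrow> 'k)) \<Rightarrow> bool" where
  "artinian_mod V D U \<longleftrightarrow>
     (\<forall>F :: nat \<Rightarrow> (nat \<Rightarrow> 'k) set. (\<forall>n. submodule V D U (F n)) \<and> (\<forall>n. F (Suc n) \<subseteq> F n)
        \<longrightarrow> (\<exists>N. \<forall>n\<ge>N. F n = F N))"

end

theory Submission
  imports Defs "HOL-Computational_Algebra.Polynomial"
begin

text \<open>Writing a sequence x : nat \<Rightarrow> K as \<Sum> x(n) e(n), let u act as the shift e(n) \<mapsto> e(n+1) and d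
  by e(n+1) \<mapsto> \<delta>(n+1) e(n), where \<delta>(k) = (k + \<tau> (1 - \<eta>^k)) / (1 - \<eta>); the down-up relations
  reduce to the recurrence \<delta>(n+2) = (1 + \<eta>) \<delta>(n+1) - \<eta> \<delta>(n) + 1.  Then du - ud - 1/(1 - \<eta>)
  acts diagonally with the pairwise distinct eigenvalues \<tau> \<eta>^n.

  Let M be the submodule generated by the constant sequence 1.  Its elements are eventually
  exponential polynomials \<Sum> \<eta>^(i n) p_i(n), and those involving only exponents i \<ge> m form
  submodules M(m).  The m-th power of the diagonal element sends 1 to (\<tau> \<eta>^n)^m, which lies in
  M(m) but not in M(m+1), so M is not artinian.  Every nonzero submodule contains e(0): a product
  of difference operators u - \<eta>^(-i) kills the exponential-polynomial tail of a nonzero element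
  without killing the element, the distinct eigenvalues then isolate a single e(k), and d carries
  it down to e(0) because \<delta> has no zeros among the positive integers.  The latter is arranged by
  taking \<tau> = 1/q for a suitable integer q.\<close>

lemma inj_power_not_root_of_unity:
  fixes \<eta> :: "'a::field"
  assumes "\<eta> \<noteq> 0" and "\<forall>n::nat. n > 0 \<longrightarrow> \<eta> ^ n \<noteq> 1"
  shows "inj (\<lambda>n::nat. \<eta> ^ n)"
proof -
  have "a = b" if "a \<le> b" and "\<eta> ^ a = \<eta> ^ b" for a b :: nat
  proof -
    have "\<eta> ^ a * \<eta> ^ (b - a) = \<eta> ^ a * 1"
      using that by (metis le_add_diff_inverse mult_1_right power_add)
    then have "\<eta> ^ (b - a) = 1"
      using \<open>\<eta> \<noteq> 0\<close> by simp
    then show "a = b"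
      using assms(2) \<open>a \<le> b\<close> by (metis diff_is_0_eq le_antisym zero_less_iff_neq_zero)
  qed
  then show ?thesis
    by (metis injI nat_le_linear)
qed

lemma exists_modulus_avoiding_powers:
  fixes \<eta> :: "'a::{comm_semiring_1,semiring_char_0}"
  shows "\<exists>q::nat. q \<ge> 2 \<and> (\<forall>k\<ge>1. \<eta> ^ k \<noteq> of_nat (q * k + 1))"
proof (cases "\<exists>k\<ge>1. \<eta> ^ k = of_nat (2 * k + 1)")
  case True
  then obtain k where "k \<ge> 1" and k: "\<eta> ^ k = of_nat (2 * k + 1)"
    by blast
  define q where "q = 2 * k + 1"
  have "\<eta> ^ j \<noteq> of_nat (q * j + 1)" if "j \<ge> 1" for j
  proof
    assume j: "\<eta> ^ j = of_nat (q * j + 1)"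
    have "of_nat (q ^ j) = (\<eta> ^ k) ^ j"
      by (simp add: k q_def)
    also have "\<dots> = (\<eta> ^ j) ^ k"
      by (simp flip: power_mult add: mult.commute)
    also have "\<dots> = of_nat ((q * j + 1) ^ k)"
      by (simp add: j)
    finally have "q ^ j = (q * j + 1) ^ k"
      by (simp only: of_nat_eq_iff)
    then have "(q * j + 1) ^ k mod q = 0"
      using \<open>j \<ge> 1\<close> by (metis dvd_eq_mod_eq_0 dvd_power less_le_trans zero_less_one)
    moreover have "(q * j + 1) ^ k mod q = 1"
    proof -
      have "q > 1"
        using \<open>k \<ge> 1\<close> by (simp add: q_def)
      then have "(q * j + 1) mod q = 1"
        by (metis add.commute mod_less mod_mult_self2 mult.commute)
      then show ?thesis
        using \<open>q > 1\<close> by (metis mod_less power_mod power_one)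
    qed
    ultimately show False
      by simp
  qed
  moreover have "q \<ge> 2"
    using \<open>k \<ge> 1\<close> by (simp add: q_def)
  ultimately show ?thesis
    by blast
next
  case False
  then show ?thesis
    by (intro exI[of _ 2]) simp
qed

lemma degree_pcompose_shift_diff_less:
  fixes p :: "'a::idom poly"
  assumes "degree p > 0"
  shows "degree (pcompose p [:c, 1:] - p) < degree p"
proof -
  have deg: "degree (pcompose p [:c, 1:]) = degree p"
    by (simp add: degree_pcompose)
  have "lead_coeff (pcompose p [:c, 1:]) = lead_coeff p"
    by (simp add: lead_coeff_comp)
  then have "coeff (pcompose p [:c, 1:] - p) (degree p) = 0"
    by (simp add: deg)
  moreover have "degree (pcompose p [:c, 1:] - p) \<le> degree p"
    using deg degree_diff_le by (metis order_refl)
  ultimately show ?thesis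
    using assms by (metis degree_0 degree_less_if_less_eqI)
qed

lemma submodule_iff_invariant:
  "submodule V D U W \<longleftrightarrow> W \<subseteq> V \<and> submodule UNIV D U W"
  by (simp add: submodule_def)

lemma submodule_self: "submodule UNIV D U W \<Longrightarrow> submodule W D U W"
  by (simp add: submodule_def)

lemma submodule_zero: "submodule V D U W \<Longrightarrow> 0 \<in> W"
  by (simp add: submodule_def is_subspace_def)

lemma submodule_add: "submodule V D U W \<Longrightarrow> x \<in> W \<Longrightarrow> y \<in> W \<Longrightarrow> x + y \<in> W"
  by (simp add: submodule_def is_subspace_def)

lemma submodule_vsmult: "submodule V D U W \<Longrightarrow> x \<in> W \<Longrightarrow> vsmult c x \<in> W"
  by (simp add: submodule_def is_subspace_def)

lemma submodule_diff:
  assumes "submodule V D U W" "x \<in> W" "y \<in> W"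
  shows "x - y \<in> W"
proof -
  have "x - y = x + vsmult (- 1) y"
    by (simp add: vsmult_def fun_eq_iff)
  then show ?thesis
    using assms by (metis submodule_add submodule_vsmult)
qed

lemma vsmult_inverse_vsmult: "c \<noteq> 0 \<Longrightarrow> vsmult (inverse c) (vsmult c x) = x"
  by (simp add: vsmult_def fun_eq_iff)

lemma submodule_down: "submodule V D U W \<Longrightarrow> x \<in> W \<Longrightarrow> D x \<in> W"
  by (simp add: submodule_def)

lemma submodule_up: "submodule V D U W \<Longrightarrow> x \<in> W \<Longrightarrow> U x \<in> W"
  by (simp add: submodule_def)

lemma submodule_Int:
  "submodule V D U A \<Longrightarrow> submodule V' D U B \<Longrightarrow> submodule V D U (A \<inter> B)"
  by (auto simp: submodule_def is_subspace_def)

definition generated_submodule ::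
  "((nat \<Rightarrow> 'k::field) \<Rightarrow> (nat \<Rightarrow> 'k)) \<Rightarrow> ((nat \<Rightarrow> 'k) \<Rightarrow> (nat \<Rightarrow> 'k))
     \<Rightarrow> (nat \<Rightarrow> 'k) set \<Rightarrow> (nat \<Rightarrow> 'k) set" where
  "generated_submodule D U S = \<Inter>{W. submodule UNIV D U W \<and> S \<subseteq> W}"

lemma submodule_generated_submodule: "submodule UNIV D U (generated_submodule D U S)"
  by (auto simp: generated_submodule_def submodule_def is_subspace_def)

lemma generated_submodule_superset: "S \<subseteq> generated_submodule D U S"
  by (auto simp: generated_submodule_def)

lemma generated_submodule_least:
  "submodule UNIV D U W \<Longrightarrow> S \<subseteq> W \<Longrightarrow> generated_submodule D U S \<subseteq> W"
  by (auto simp: generated_submodule_def)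

lemma finitely_generated_generated_submodule:
  assumes "finite S"
  shows "finitely_generated_mod (generated_submodule D U S) D U"
proof -
  let ?M = "generated_submodule D U S"
  have "?M = \<Inter>{W. submodule ?M D U W \<and> S \<subseteq> W}"
  proof (rule antisym)
    show "?M \<subseteq> \<Inter>{W. submodule ?M D U W \<and> S \<subseteq> W}"
      by (auto simp: submodule_iff_invariant[of ?M] dest: generated_submodule_least)
    have "submodule ?M D U ?M"
      using submodule_generated_submodule by (rule submodule_self)
    then show "\<Inter>{W. submodule ?M D U W \<and> S \<subseteq> W} \<subseteq> ?M"
      using generated_submodule_superset by (intro Inter_lower) simp
  qed
  then show ?thesis
    unfolding finitely_generated_mod_def
    using assms generated_submodule_superset by (intro exI[of _ S]) simp
qed

lemma monolithic_modI:
  assumes "x \<in> V" "x \<noteq> 0" "\<And>W. submodule V D U W \<Longrightarrow> W \<noteq> {0} \<Longrightarrow> x \<in> W"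
  shows "monolithic_mod V D U"
  unfolding monolithic_mod_def using assms by blast

lemma not_artinian_modI:
  assumes "\<And>n. submodule V D U (F n)" "\<And>n. F (Suc n) \<subset> F n"
  shows "\<not> artinian_mod V D U"
proof
  assume "artinian_mod V D U"
  then obtain N where "\<forall>n\<ge>N. F n = F N"
    using assms unfolding artinian_mod_def by blast
  then have "F (Suc N) = F N"
    using le_SucI by blast
  then show False
    using assms(2)[of N] by simp
qed

locale downup_shift_model =
  fixes \<eta> \<tau> :: "'k::field_char_0"
  assumes eta_nonzero: "\<eta> \<noteq> 0"
    and eta_not_root_of_unity: "\<forall>n::nat. n > 0 \<longrightarrow> \<eta> ^ n \<noteq> 1"
    and tau_nonzero: "\<tau> \<noteq> 0"
    and delta_numerator_nonzero: "\<And>k. k \<ge> 1 \<Longrightarrow> of_nat k + \<tau> * (1 - \<eta> ^ k) \<noteq> 0"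
begin

definition lam :: 'k where "lam = inverse (1 - \<eta>)"

definition \<delta> :: "nat \<Rightarrow> 'k" where "\<delta> k = lam * (of_nat k + \<tau> * (1 - \<eta> ^ k))"

definition down :: "(nat \<Rightarrow> 'k) \<Rightarrow> nat \<Rightarrow> 'k" where
  "down x n = \<delta> (Suc n) * x (Suc n)"

definition up :: "(nat \<Rightarrow> 'k) \<Rightarrow> nat \<Rightarrow> 'k" where
  "up x n = (case n of 0 \<Rightarrow> 0 | Suc m \<Rightarrow> x m)"

lemma up_0 [simp]: "up x 0 = 0"
  by (simp add: up_def)

lemma up_Suc [simp]: "up x (Suc n) = x n"
  by (simp add: up_def)

lemma eta_ne_1: "\<eta> \<noteq> 1"
  using eta_not_root_of_unity by (metis power_one_right zero_less_one)

lemma inj_eta_power: "inj (\<lambda>n::nat. \<eta> ^ n)"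
  using eta_nonzero eta_not_root_of_unity by (rule inj_power_not_root_of_unity)

lemma lam_nonzero: "lam \<noteq> 0"
  using eta_ne_1 by (simp add: lam_def)

lemma delta_0 [simp]: "\<delta> 0 = 0"
  by (simp add: \<delta>_def)

lemma delta_Suc_nonzero: "\<delta> (Suc k) \<noteq> 0"
  using delta_numerator_nonzero[of "Suc k"] lam_nonzero by (simp add: \<delta>_def)

lemma delta_recurrence: "\<delta> (Suc (Suc n)) = (1 + \<eta>) * \<delta> (Suc n) - \<eta> * \<delta> n + 1"
proof -
  have "\<delta> (Suc (Suc n)) - (1 + \<eta>) * \<delta> (Suc n) + \<eta> * \<delta> n = lam * (1 - \<eta>)"
    by (simp add: \<delta>_def algebra_simps)
  also have "\<dots> = 1"
    using eta_ne_1 by (simp add: lam_def)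
  finally show ?thesis
    by (simp add: algebra_simps)
qed

lemma down_up: "down (up x) n = \<delta> (Suc n) * x n"
  by (simp add: down_def)

lemma up_down: "up (down x) n = \<delta> n * x n"
  by (cases n) (simp_all add: down_def)

lemma downup_relation_down:
  "down (down (up x)) = vsmult (1 + \<eta>) (down (up (down x))) + vsmult (- \<eta>) (up (down (down x)))
     + vsmult 1 (down x)"
proof (rule ext)
  fix n
  have "down (down (up x)) n = \<delta> (Suc n) * \<delta> (Suc (Suc n)) * x (Suc n)"
    by (simp add: down_def)
  then show "down (down (up x)) n = (vsmult (1 + \<eta>) (down (up (down x))) + vsmult (- \<eta>) (up (down (down x)))
     + vsmult 1 (down x)) n"
    by (simp add: vsmult_def down_up up_down down_def delta_recurrence algebra_simps)
qed

lemma downup_relation_up: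
  "down (up (up x)) = vsmult (1 + \<eta>) (up (down (up x))) + vsmult (- \<eta>) (up (up (down x)))
     + vsmult 1 (up x)"
proof (rule ext)
  fix n
  show "down (up (up x)) n = (vsmult (1 + \<eta>) (up (down (up x))) + vsmult (- \<eta>) (up (up (down x)))
     + vsmult 1 (up x)) n"
    by (cases n) (simp_all add: vsmult_def down_up up_down delta_recurrence algebra_simps)
qed

lemma down_add: "down (x + y) = down x + down y"
  by (simp add: fun_eq_iff down_def distrib_left)

lemma up_add: "up (x + y) = up x + up y"
  by (simp add: fun_eq_iff up_def split: nat.split)

lemma down_vsmult: "down (vsmult c x) = vsmult c (down x)"
  by (simp add: fun_eq_iff down_def vsmult_def mult.left_commute)

lemma up_vsmult: "up (vsmult c x) = vsmult c (up x)"
  by (simp add: fun_eq_iff up_def vsmult_def split: nat.split)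

lemma downup_module_if_invariant:
  assumes "submodule UNIV down up W"
  shows "downup_module (1 + \<eta>) (- \<eta>) 1 W down up"
  using assms
  by (simp add: downup_module_def submodule_def down_add up_add down_vsmult up_vsmult
      downup_relation_down downup_relation_up)

definition weight :: "nat \<Rightarrow> 'k" where "weight n = \<tau> * \<eta> ^ n"

definition weight_op :: "(nat \<Rightarrow> 'k) \<Rightarrow> nat \<Rightarrow> 'k" where
  "weight_op x = down (up x) - up (down x) - vsmult lam x"

lemma weight_op_apply: "weight_op x n = weight n * x n"
proof -
  have "\<delta> (Suc n) - \<delta> n - lam = lam * (1 - \<eta>) * (\<tau> * \<eta> ^ n)"
    by (simp add: \<delta>_def algebra_simps)
  then have "\<delta> (Suc n) - \<delta> n - lam = weight n"
    using eta_ne_1 by (simp add: lam_def weight_def)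
  then show ?thesis
    by (simp add: weight_op_def down_up up_down vsmult_def algebra_simps)
qed

lemma inj_weight: "inj weight"
  using inj_eta_power tau_nonzero by (auto simp: inj_def weight_def)

lemma submodule_weight_op:
  assumes "submodule V down up W" "x \<in> W"
  shows "weight_op x \<in> W"
proof -
  have "down (up x) \<in> W" "up (down x) \<in> W" "vsmult lam x \<in> W"
    using assms by (metis submodule_down submodule_up submodule_vsmult)+
  then show ?thesis
    unfolding weight_op_def using assms(1) by (metis submodule_diff)
qed

definition exp_poly :: "(nat \<times> 'k poly) list \<Rightarrow> nat \<Rightarrow> 'k" where
  "exp_poly xs n = (\<Sum>(i, p)\<leftarrow>xs. \<eta> ^ (i * n) * poly p (of_nat n))"

definition eventually_exp_poly :: "nat \<Rightarrow> (nat \<Rightarrow> 'k) set" where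
  "eventually_exp_poly m =
     {g. \<exists>xs N. (\<forall>(i, p)\<in>set xs. m \<le> i) \<and> (\<forall>n\<ge>N. g n = exp_poly xs n)}"

lemma exp_poly_Nil [simp]: "exp_poly [] n = 0"
  by (simp add: exp_poly_def)

lemma exp_poly_Cons [simp]:
  "exp_poly ((i, p) # xs) n = \<eta> ^ (i * n) * poly p (of_nat n) + exp_poly xs n"
  by (simp add: exp_poly_def)

lemma exp_poly_append [simp]: "exp_poly (xs @ ys) n = exp_poly xs n + exp_poly ys n"
  by (simp add: exp_poly_def)

lemma exp_poly_smult: "exp_poly (map (\<lambda>(i, p). (i, smult c p)) xs) n = c * exp_poly xs n"
  by (induction xs) (auto simp: algebra_simps)

definition diff_step :: "'k \<Rightarrow> nat \<Rightarrow> 'k poly \<Rightarrow> 'k poly" where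
  "diff_step \<mu> i p = smult (inverse (\<eta> ^ i)) (pcompose p [:-1, 1:]) - smult \<mu> p"

lemma exp_poly_diff_step:
  "exp_poly (map (\<lambda>(i, p). (i, diff_step \<mu> i p)) xs) (Suc n)
     = exp_poly xs n - \<mu> * exp_poly xs (Suc n)"
proof (induction xs)
  case (Cons a xs)
  obtain i p where a: "a = (i, p)"
    by fastforce
  have "\<eta> ^ (i * Suc n) * inverse (\<eta> ^ i) = \<eta> ^ (i * n)"
    using eta_nonzero by (simp add: power_add)
  then have "\<eta> ^ (i * Suc n) * poly (diff_step \<mu> i p) (of_nat (Suc n))
      = \<eta> ^ (i * n) * poly p (of_nat n) - \<mu> * (\<eta> ^ (i * Suc n) * poly p (of_nat (Suc n)))"
    by (simp add: diff_step_def poly_pcompose algebra_simps)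
  then show ?case
    using Cons.IH by (simp add: a algebra_simps)
qed simp

text \<open>Multiplication by \<open>\<delta> (Suc n) = lam * (n + 1 + \<tau>) - lam * \<tau> * \<eta> * \<eta> ^ n\<close> raises the
  degree of every term and creates a new term whose exponent is one larger.\<close>
definition down_terms :: "(nat \<times> 'k poly) list \<Rightarrow> (nat \<times> 'k poly) list" where
  "down_terms xs =
     map (\<lambda>(i, p). (i, smult (\<eta> ^ i) (pcompose p [:1, 1:]) * [:lam * (1 + \<tau>), lam:])) xs @
     map (\<lambda>(i, p). (Suc i, smult (- (lam * \<tau> * \<eta> * \<eta> ^ i)) (pcompose p [:1, 1:]))) xs"

lemma exp_poly_down_terms: "exp_poly (down_terms xs) n = \<delta> (Suc n) * exp_poly xs (Suc n)"
proof (induction xs)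
  case Nil
  then show ?case
    by (simp add: down_terms_def)
next
  case (Cons a xs)
  obtain i p where a: "a = (i, p)"
    by fastforce
  have "\<eta> ^ (i * n) * poly (smult (\<eta> ^ i) (pcompose p [:1, 1:]) * [:lam * (1 + \<tau>), lam:]) (of_nat n)
      + \<eta> ^ (Suc i * n) * poly (smult (- (lam * \<tau> * \<eta> * \<eta> ^ i)) (pcompose p [:1, 1:])) (of_nat n)
      = \<delta> (Suc n) * (\<eta> ^ (i * Suc n) * poly p (of_nat (Suc n)))"
    by (simp add: \<delta>_def poly_pcompose power_add algebra_simps)
  then show ?case
    using Cons.IH by (simp add: down_terms_def a algebra_simps)
qed

definition diff_op :: "'k \<Rightarrow> (nat \<Rightarrow> 'k) \<Rightarrow> nat \<Rightarrow> 'k" where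
  "diff_op \<mu> g = up g - vsmult \<mu> g"

lemma up_eq_diff_op: "up g = diff_op 0 g"
  by (simp add: diff_op_def vsmult_def fun_eq_iff)

lemma diff_op_exp_poly:
  assumes "\<forall>n\<ge>N. g n = exp_poly xs n"
  shows "\<forall>n\<ge>Suc N. diff_op \<mu> g n = exp_poly (map (\<lambda>(i, p). (i, diff_step \<mu> i p)) xs) n"
proof (intro allI impI)
  fix n
  assume "Suc N \<le> n"
  then obtain k where "n = Suc k" "k \<ge> N"
    by (metis Suc_le_D Suc_le_mono)
  then show "diff_op \<mu> g n = exp_poly (map (\<lambda>(i, p). (i, diff_step \<mu> i p)) xs) n"
    using assms by (simp add: diff_op_def vsmult_def exp_poly_diff_step)
qed

lemma submodule_eventually_exp_poly: "submodule UNIV down up (eventually_exp_poly m)"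
  unfolding submodule_def is_subspace_def
proof (intro conjI ballI allI subset_UNIV)
  show "0 \<in> eventually_exp_poly m"
    unfolding eventually_exp_poly_def by (intro CollectI exI[of _ "[]"]) simp
next
  fix x y
  assume "x \<in> eventually_exp_poly m" "y \<in> eventually_exp_poly m"
  then obtain xs N ys N' where
    "\<forall>(i, p)\<in>set xs. m \<le> i" "\<forall>n\<ge>N. x n = exp_poly xs n"
    "\<forall>(i, p)\<in>set ys. m \<le> i" "\<forall>n\<ge>N'. y n = exp_poly ys n"
    unfolding eventually_exp_poly_def by blast
  then show "x + y \<in> eventually_exp_poly m"
    unfolding eventually_exp_poly_def by (intro CollectI exI[of _ "xs @ ys"] exI[of _ "max N N'"]) auto
next
  fix c x
  assume "x \<in> eventually_exp_poly m"
  then obtain xs N where xs: "\<forall>(i, p)\<in>set xs. m \<le> i" "\<forall>n\<ge>N. x n = exp_poly xs n"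
    unfolding eventually_exp_poly_def by blast
  show "vsmult c x \<in> eventually_exp_poly m"
    unfolding eventually_exp_poly_def
    using xs by (intro CollectI exI[of _ "map (\<lambda>(i, p). (i, smult c p)) xs"] exI[of _ N])
      (auto simp: exp_poly_smult vsmult_def)
  show "down x \<in> eventually_exp_poly m"
    unfolding eventually_exp_poly_def
  proof (intro CollectI exI[of _ "down_terms xs"] exI[of _ N] conjI)
    show "\<forall>(i, p)\<in>set (down_terms xs). m \<le> i"
      using xs(1) by (auto simp: down_terms_def)
    show "\<forall>n\<ge>N. down x n = exp_poly (down_terms xs) n"
      using xs(2) by (simp add: exp_poly_down_terms down_def)
  qed
  show "up x \<in> eventually_exp_poly m"
    unfolding eventually_exp_poly_def up_eq_diff_op
    using xs diff_op_exp_poly[OF xs(2)]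
    by (intro CollectI exI[of _ "map (\<lambda>(i, p). (i, diff_step 0 i p)) xs"] exI[of _ "Suc N"]) auto
qed

fun diff_ops :: "'k list \<Rightarrow> (nat \<Rightarrow> 'k) \<Rightarrow> nat \<Rightarrow> 'k" where
  "diff_ops [] g = g"
| "diff_ops (\<mu> # L) g = diff_ops L (diff_op \<mu> g)"

fun diff_steps :: "'k list \<Rightarrow> nat \<Rightarrow> 'k poly \<Rightarrow> 'k poly" where
  "diff_steps [] i p = p"
| "diff_steps (\<mu> # L) i p = diff_steps L i (diff_step \<mu> i p)"

lemma diff_ops_exp_poly:
  assumes "\<forall>n\<ge>N. g n = exp_poly xs n"
  shows "\<forall>n\<ge>N + length L. diff_ops L g n = exp_poly (map (\<lambda>(i, p). (i, diff_steps L i p)) xs) n"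
  using assms
proof (induction L arbitrary: g xs N)
  case (Cons \<mu> L)
  have steps: "map (\<lambda>(i, p). (i, diff_steps L i p)) (map (\<lambda>(i, p). (i, diff_step \<mu> i p)) xs)
      = map (\<lambda>(i, p). (i, diff_steps (\<mu> # L) i p)) xs"
    by auto
  from Cons.IH[OF diff_op_exp_poly[where \<mu> = \<mu>, OF Cons.prems]] show ?case
    unfolding steps by simp
qed (simp add: case_prod_beta)

lemma submodule_diff_ops:
  assumes "submodule V down up W" "g \<in> W"
  shows "diff_ops L g \<in> W"
  using assms(2)
proof (induction L arbitrary: g)
  case (Cons \<mu> L)
  have "diff_op \<mu> g \<in> W"
    unfolding diff_op_def using assms(1) Cons.prems
    by (metis submodule_diff submodule_up submodule_vsmult)
  then show ?case
    using Cons.IH by simp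
qed simp

lemma diff_op_eq_0_iff:
  assumes "\<mu> \<noteq> 0"
  shows "diff_op \<mu> g = 0 \<longleftrightarrow> g = 0"
proof
  assume g: "diff_op \<mu> g = 0"
  have "g n = 0" for n
  proof (induction n)
    case 0
    then show ?case
      using fun_cong[OF g, of 0] assms by (simp add: diff_op_def vsmult_def)
  next
    case (Suc n)
    then show ?case
      using fun_cong[OF g, of "Suc n"] assms by (simp add: diff_op_def vsmult_def)
  qed
  then show "g = 0"
    by auto
qed (simp add: diff_op_def vsmult_def fun_eq_iff up_def split: nat.split)

lemma diff_ops_eq_0_iff: "\<forall>\<mu>\<in>set L. \<mu> \<noteq> 0 \<Longrightarrow> diff_ops L g = 0 \<longleftrightarrow> g = 0"
  by (induction L arbitrary: g) (simp_all add: diff_op_eq_0_iff)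

lemma degree_diff_step_le: "degree (diff_step \<mu> i p) \<le> degree p"
  unfolding diff_step_def by (rule degree_diff_le) (simp_all add: degree_pcompose)

lemma diff_step_self:
  "diff_step (inverse (\<eta> ^ i)) i p = smult (inverse (\<eta> ^ i)) (pcompose p [:-1, 1:] - p)"
  by (simp add: diff_step_def smult_diff_right)

lemma diff_steps_0 [simp]: "diff_steps L i 0 = 0"
  by (induction L) (simp_all add: diff_step_def)

text \<open>\<open>diff_op (inverse (\<eta> ^ i))\<close> lowers the degree of the polynomial attached to the
  exponent \<open>i\<close>, just as the difference operator does for ordinary polynomials.\<close>
lemma diff_steps_annihilate:
  "degree p < count_list L (inverse (\<eta> ^ i)) \<Longrightarrow> diff_steps L i p = 0"
proof (induction L arbitrary: p)
  case (Cons \<mu> L)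
  show ?case
  proof (cases "\<mu> = inverse (\<eta> ^ i)")
    case True
    show ?thesis
    proof (cases "degree p = 0")
      case True
      then obtain c where "p = [:c:]"
        by (rule degree_eq_zeroE)
      then show ?thesis
        using \<open>\<mu> = _\<close> by (simp add: diff_step_self)
    next
      case False
      then have "degree (diff_step \<mu> i p) < degree p"
        using \<open>\<mu> = _\<close> degree_pcompose_shift_diff_less[of p "-1"]
        by (simp add: diff_step_self)
      then show ?thesis
        using Cons \<open>\<mu> = _\<close> by simp
    qed
  next
    case False
    then show ?thesis
      using Cons degree_diff_step_le[of \<mu> i p] by simp
  qed
qed simp

definition annihilator :: "(nat \<times> 'k poly) list \<Rightarrow> 'k list" where
  "annihilator xs = concat (map (\<lambda>(i, p). replicate (Suc (degree p)) (inverse (\<eta> ^ i))) xs)"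

lemma set_annihilator: "set (annihilator xs) = (\<lambda>(i, p). inverse (\<eta> ^ i)) ` set xs"
  by (auto simp: annihilator_def)

lemma degree_less_count_annihilator:
  "(i, p) \<in> set xs \<Longrightarrow> degree p < count_list (annihilator xs) (inverse (\<eta> ^ i))"
proof (induction xs)
  case (Cons a xs)
  have "count_list (replicate n x) x = n" for n and x :: 'k
    by (induction n) simp_all
  then show ?case
    using Cons by (cases a) (auto simp: annihilator_def)
qed simp

lemma diff_ops_annihilator_eventually_0:
  assumes "\<forall>n\<ge>N. g n = exp_poly xs n"
  shows "\<forall>n\<ge>N + length (annihilator xs). diff_ops (annihilator xs) g n = 0"
proof -
  have "exp_poly (map (\<lambda>(i, p). (i, diff_steps (annihilator xs) i p)) ys) n = 0"
    if "set ys \<subseteq> set xs" for ys n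
    using that
    by (induction ys) (auto simp: diff_steps_annihilate degree_less_count_annihilator)
  then show ?thesis
    using diff_ops_exp_poly[OF assms] by simp
qed

definition unit_vec :: "nat \<Rightarrow> nat \<Rightarrow> 'k" where
  "unit_vec k n = (if n = k then 1 else 0)"

lemma unit_vec_nonzero: "unit_vec k \<noteq> 0"
  by (simp add: unit_vec_def fun_eq_iff)

lemma down_unit_vec: "down (unit_vec (Suc k)) = vsmult (\<delta> (Suc k)) (unit_vec k)"
  by (simp add: fun_eq_iff down_def unit_vec_def vsmult_def)

lemma unit_vec_0_mem:
  assumes "submodule V down up W" "unit_vec k \<in> W"
  shows "unit_vec 0 \<in> W"
  using assms(2)
proof (induction k)
  case (Suc k)
  have "vsmult (inverse (\<delta> (Suc k))) (down (unit_vec (Suc k))) \<in> W"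
    using assms(1) Suc.prems by (metis submodule_down submodule_vsmult)
  then have "unit_vec k \<in> W"
    using delta_Suc_nonzero by (simp add: down_unit_vec vsmult_inverse_vsmult)
  then show ?case
    by (rule Suc.IH)
qed

lemma unit_vec_mem_if_finite_support:
  assumes "submodule V down up W" "g \<in> W" "finite {n. g n \<noteq> 0}" "g \<noteq> 0"
  shows "\<exists>k. unit_vec k \<in> W"
  using assms(2-)
proof (induction "card {n. g n \<noteq> 0}" arbitrary: g rule: less_induct)
  case less
  obtain k where k: "g k \<noteq> 0"
    using less.prems(3) by (auto simp: fun_eq_iff)
  show ?case
  proof (cases "{n. g n \<noteq> 0} = {k}")
    case True
    then have "g = vsmult (g k) (unit_vec k)"
      by (auto simp: fun_eq_iff vsmult_def unit_vec_def)
    then have "unit_vec k = vsmult (inverse (g k)) g"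
      using k by (metis vsmult_inverse_vsmult)
    then show ?thesis
      using assms(1) less.prems(1) by (metis submodule_vsmult)
  next
    case False
    then obtain j where j: "g j \<noteq> 0" "j \<noteq> k"
      using k by blast
    define g' where "g' = weight_op g - vsmult (weight j) g"
    have g': "g' n = (weight n - weight j) * g n" for n
      by (simp add: g'_def weight_op_apply vsmult_def algebra_simps)
    have support: "{n. g' n \<noteq> 0} = {n. g n \<noteq> 0} - {j}"
      using inj_weight by (auto simp: g' inj_eq)
    have "g' \<in> W"
      unfolding g'_def using assms(1) less.prems(1)
      by (metis submodule_diff submodule_vsmult submodule_weight_op)
    moreover have "card {n. g' n \<noteq> 0} < card {n. g n \<noteq> 0}"
      unfolding support using less.prems(2) j(1) by (intro card_Diff1_less) auto
    moreover have "g' \<noteq> 0"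
      using support k j(2) by (metis (mono_tags) DiffI mem_Collect_eq singletonD zero_fun_apply)
    moreover have "finite {n. g' n \<noteq> 0}"
      using less.prems(2) by (simp add: support)
    ultimately show ?thesis
      using less.hyps by blast
  qed
qed

lemma unit_vec_0_mem_if_exp_poly:
  assumes "submodule V down up W" "W \<subseteq> eventually_exp_poly 0" "g \<in> W" "g \<noteq> 0"
  shows "unit_vec 0 \<in> W"
proof -
  obtain xs N where xs: "\<forall>n\<ge>N. g n = exp_poly xs n"
    using assms(2,3) by (auto simp: eventually_exp_poly_def)
  define g' where "g' = diff_ops (annihilator xs) g"
  have "g' \<in> W"
    unfolding g'_def using assms(1,3) by (rule submodule_diff_ops)
  moreover have "finite {n. g' n \<noteq> 0}"
  proof (rule finite_subset)
    show "{n. g' n \<noteq> 0} \<subseteq> {..<N + length (annihilator xs)}"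
      using diff_ops_annihilator_eventually_0[OF xs] by (auto simp: g'_def not_less[symmetric])
  qed simp
  moreover have "\<forall>\<mu>\<in>set (annihilator xs). \<mu> \<noteq> 0"
    using eta_nonzero by (auto simp: set_annihilator)
  then have "g' \<noteq> 0"
    using assms(4) by (simp add: g'_def diff_ops_eq_0_iff)
  ultimately obtain k where "unit_vec k \<in> W"
    using unit_vec_mem_if_finite_support[OF assms(1)] by blast
  then show ?thesis
    by (rule unit_vec_0_mem[OF assms(1)])
qed

definition cyclic_module :: "(nat \<Rightarrow> 'k) set" where
  "cyclic_module = generated_submodule down up {1}"

lemma submodule_cyclic_module: "submodule UNIV down up cyclic_module"
  unfolding cyclic_module_def by (rule submodule_generated_submodule)

lemma one_mem_cyclic_module: "1 \<in> cyclic_module"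
  using generated_submodule_superset by (auto simp: cyclic_module_def)

lemma cyclic_module_subset_exp_poly: "cyclic_module \<subseteq> eventually_exp_poly 0"
proof -
  have "1 \<in> eventually_exp_poly 0"
    unfolding eventually_exp_poly_def by (intro CollectI exI[of _ "[(0, 1)]"]) simp
  then show ?thesis
    unfolding cyclic_module_def
    using submodule_eventually_exp_poly by (intro generated_submodule_least) auto
qed

lemma monolithic_cyclic_module: "monolithic_mod cyclic_module down up"
proof (rule monolithic_modI)
  have "submodule cyclic_module down up cyclic_module"
    using submodule_cyclic_module by (rule submodule_self)
  then show "unit_vec 0 \<in> cyclic_module"
    using cyclic_module_subset_exp_poly one_mem_cyclic_module
    by (rule unit_vec_0_mem_if_exp_poly) (simp add: fun_eq_iff)
next
  fix W
  assume W: "submodule cyclic_module down up W" "W \<noteq> {0}"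
  then obtain g where "g \<in> W" "g \<noteq> 0"
    using submodule_zero by blast
  moreover have "W \<subseteq> eventually_exp_poly 0"
    using W(1) cyclic_module_subset_exp_poly by (auto simp: submodule_def)
  ultimately show "unit_vec 0 \<in> W"
    using W(1) unit_vec_0_mem_if_exp_poly by blast
qed (rule unit_vec_nonzero)

lemma weight_power_mem_cyclic_module: "(\<lambda>n. weight n ^ m) \<in> cyclic_module"
proof (induction m)
  case 0
  then show ?case
    using one_mem_cyclic_module by (simp add: one_fun_def)
next
  case (Suc m)
  have "(\<lambda>n. weight n ^ Suc m) = weight_op (\<lambda>n. weight n ^ m)"
    by (simp add: fun_eq_iff weight_op_apply)
  then show ?case
    using submodule_weight_op[OF submodule_cyclic_module Suc] by simp
qed

lemma weight_power_eq_exp_poly: "weight n ^ m = exp_poly [(m, [:\<tau> ^ m:])] n"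
  by (simp add: weight_def power_mult_distrib mult.commute[of m] flip: power_mult)

lemma weight_power_mem_exp_poly: "(\<lambda>n. weight n ^ m) \<in> eventually_exp_poly m"
  unfolding eventually_exp_poly_def weight_power_eq_exp_poly
  by (intro CollectI exI[of _ "[(m, [:\<tau> ^ m:])]"] exI[of _ 0]) simp

lemma diff_steps_const: "diff_steps L i [:c:] = [:c * (\<Prod>\<mu>\<leftarrow>L. inverse (\<eta> ^ i) - \<mu>):]"
  by (induction L arbitrary: c) (simp_all add: diff_step_def algebra_simps)

text \<open>The annihilator of a representation with exponents above \<open>m\<close> acts on \<open>\<eta> ^ (m * n)\<close>
  by a nonzero scalar, but kills the tail of the representation.\<close>
lemma weight_power_not_mem_exp_poly: "(\<lambda>n. weight n ^ m) \<notin> eventually_exp_poly (Suc m)"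
proof
  assume "(\<lambda>n. weight n ^ m) \<in> eventually_exp_poly (Suc m)"
  then obtain xs N where exps: "\<forall>(i, p)\<in>set xs. Suc m \<le> i"
    and xs: "\<forall>n\<ge>N. weight n ^ m = exp_poly xs n"
    unfolding eventually_exp_poly_def by blast
  define L where "L = annihilator xs"
  define n where "n = N + length L"
  have "diff_ops L (\<lambda>n. weight n ^ m) n = 0"
    using diff_ops_annihilator_eventually_0[OF xs] by (simp add: L_def n_def)
  moreover have "diff_ops L (\<lambda>n. weight n ^ m) n
      = \<eta> ^ (m * n) * (\<tau> ^ m * (\<Prod>\<mu>\<leftarrow>L. inverse (\<eta> ^ m) - \<mu>))"
    using diff_ops_exp_poly[of 0 _ "[(m, [:\<tau> ^ m:])]" L] weight_power_eq_exp_poly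
    by (simp add: n_def diff_steps_const)
  ultimately have "(\<Prod>\<mu>\<leftarrow>L. inverse (\<eta> ^ m) - \<mu>) = 0"
    using eta_nonzero tau_nonzero by simp
  then obtain i p where "(i, p) \<in> set xs" "\<eta> ^ m = \<eta> ^ i"
    by (auto simp: prod_list_zero_iff L_def set_annihilator)
  then show False
    using exps inj_eta_power by (fastforce dest: injD)
qed

lemma eventually_exp_poly_Suc_subset: "eventually_exp_poly (Suc m) \<subseteq> eventually_exp_poly m"
  unfolding eventually_exp_poly_def by fastforce

lemma not_artinian_cyclic_module: "\<not> artinian_mod cyclic_module down up"
proof (rule not_artinian_modI)
  fix m
  have "submodule cyclic_module down up cyclic_module"
    using submodule_cyclic_module by (rule submodule_self)
  then show "submodule cyclic_module down up (cyclic_module \<inter> eventually_exp_poly m)"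
    using submodule_eventually_exp_poly by (rule submodule_Int)
  show "cyclic_module \<inter> eventually_exp_poly (Suc m) \<subset> cyclic_module \<inter> eventually_exp_poly m"
    using eventually_exp_poly_Suc_subset weight_power_mem_cyclic_module
      weight_power_mem_exp_poly weight_power_not_mem_exp_poly by blast
qed

lemma finitely_generated_cyclic_module: "finitely_generated_mod cyclic_module down up"
  unfolding cyclic_module_def by (simp add: finitely_generated_generated_submodule)

lemma downup_module_cyclic_module: "downup_module (1 + \<eta>) (- \<eta>) 1 cyclic_module down up"
  using submodule_cyclic_module by (rule downup_module_if_invariant)

end

theorem theorem4p2:
  fixes \<eta> :: "'k::field_char_0"
  assumes "\<eta> \<noteq> 0"
    and "\<forall>n::nat. n > 0 \<longrightarrow> \<eta> ^ n \<noteq> 1"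
  shows "\<exists>V D U. downup_module (1 + \<eta>) (- \<eta>) 1 V D U \<and> finitely_generated_mod V D U
            \<and> monolithic_mod V D U \<and> \<not> artinian_mod V D U"
proof -
  obtain q :: nat where "q \<ge> 2" and q: "\<forall>k\<ge>1. \<eta> ^ k \<noteq> of_nat (q * k + 1)"
    using exists_modulus_avoiding_powers by blast
  then have q_nonzero: "(of_nat q :: 'k) \<noteq> 0"
    by simp
  have "downup_shift_model \<eta> (inverse (of_nat q))"
  proof
    fix k :: nat
    assume "k \<ge> 1"
    have "of_nat q * (of_nat k + inverse (of_nat q) * (1 - \<eta> ^ k)) = of_nat (q * k + 1) - \<eta> ^ k"
      using q_nonzero by (simp add: algebra_simps)
    then show "of_nat k + inverse (of_nat q) * (1 - \<eta> ^ k) \<noteq> 0"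
      using q \<open>k \<ge> 1\<close> by auto
  qed (use assms q_nonzero in auto)
  then interpret downup_shift_model \<eta> "inverse (of_nat q)" .
  show ?thesis
    using downup_module_cyclic_module finitely_generated_cyclic_module monolithic_cyclic_module
      not_artinian_cyclic_module by blast
qed

end
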